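(* Sorted and semi-sorted $n$-tape asynchronous automata over a finite alphabet $A$ accept the same class of languages: a language $L\subseteq(A^\ast)^n$ is accepted by some $n$-tape sorted asynchronous automaton if and only if it is accepted by some $n$-tape semi-sorted asynchronous automaton.
   Context: $A^\ast$ is the set of finite words over $A$, $[n]=\{1,\ldots,n\}$, $\$$ is a new symbol, $w\$$ is $w$ followed by $\$$. A shuffle of $(w_1,\ldots,w_n)$ is an ordering of all letters of the $w_i$ respecting the order within each $w_i$. A partial deterministic finite state automaton has a unique start state, no $\epsilon$-transitions and at most one outgoing transition per state and letter. An $n$-tape semi-sorted asynchronous automaton over $A$ is a partial deterministic finite state automaton over $A\sqcup\{\$\}$ with a partition of its state set into $n$ sets $S_1,\ldots,S_n$; it accepts $(w_1,\ldots,w_n)$ iff some shuffle of $(w_1\$,\ldots,w_n\$)$ is read along a path from the start state to an accept state in which each letter coming from $w_i\$$ is read while in a state of $S_i$. An $n$-tape sorted asynchronous automaton over $A$ is a partial deterministic finite state automaton over $A\sqcup\{\$\}$ with a partition of its state set into subsets $S_i^V$, for $V$ a proper subset of $[n]$ and $i\in[n]\setminus V$, and a final subset $S_f^{[n]}$, such that: the start state lies in $S_i^{\emptyset}$ for some $i$; an arrow is labelled $\$$ iff it goes from a state in some $S_i^V$ to a state in $S_j^U$ with $j\neq i$ and $U=V\cup\{i\}$ (or, when $V\cup\{i\}=[n]$, to $S_f^{[n]}$); arrows not labelled $\$$ starting in $S_i^V$ end in $S_j^V$ for some $j\notin V$; $S_f^{[n]}$ consists of exactly one state, which is the unique accept state;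 no arrows start in $S_f^{[n]}$. It accepts $(w_1,\ldots,w_n)$ iff some shuffle of $(w_1\$,\ldots,w_n\$)$ is read along a path from the start state to the accept state in which each letter coming from $w_i\$$ is read while in a state of some $S_i^V$. *)

theory Defs
  imports Main
begin

text \<open>Letters of the automaton alphabet A + {$}: Some a is the letter a, None is the
end marker $. States are natural numbers (any finite state set embeds in nat).
Tapes are indexed 0..n-1 instead of 1..n.\<close>

record 'a aut =
  states :: "nat set"
  start  :: nat
  delta  :: "nat \<Rightarrow> 'a option \<Rightarrow> nat option"
  final  :: "nat set"

definition pdfa :: "'a set \<Rightarrow> 'a aut \<Rightarrow> bool" where
  "pdfa A M \<longleftrightarrow> finite (states M) \<and> start M \<in> states M \<and> final M \<subseteq> states M
     \<and> (\<forall>q\<in>states M. \<forall>c q'. delta M q c = Some q' \<longrightarrow> q' \<in> states M)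
     \<and> (\<forall>q a. a \<notin> A \<longrightarrow> delta M q (Some a) = None)"

text \<open>acc M tp q ws: starting in state q with remaining tape contents ws (the
remaining suffixes of the words w_i$), the automaton can read a shuffle of ws and
end in an accept state, where each letter is read from tape tp q of the current
state q.\<close>
inductive acc :: "'a aut \<Rightarrow> (nat \<Rightarrow> nat) \<Rightarrow> nat \<Rightarrow> 'a option list list \<Rightarrow> bool"
  for M tp where
  acc_done: "q \<in> final M \<Longrightarrow> \<forall>w\<in>set ws. w = [] \<Longrightarrow> acc M tp q ws"
| acc_step: "tp q < length ws \<Longrightarrow> ws ! (tp q) = c # r \<Longrightarrow> delta M q c = Some q'
         \<Longrightarrow> acc M tp q' (ws[tp q := r]) \<Longrightarrow> acc M tp q ws"

definition dollar :: "'a list \<Rightarrow> 'a option list" where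
  "dollar w = map Some w @ [None]"

definition lang :: "'a set \<Rightarrow> nat \<Rightarrow> 'a aut \<Rightarrow> (nat \<Rightarrow> nat) \<Rightarrow> 'a list list set" where
  "lang A n M tp = {ws. length ws = n \<and> (\<forall>w\<in>set ws. set w \<subseteq> A)
                        \<and> acc M tp (start M) (map dollar ws)}"

text \<open>Semi-sorted: partition of states into S_1..S_n given by tp (q \<in> S_(tp q)).\<close>
definition semi_sorted :: "'a set \<Rightarrow> nat \<Rightarrow> 'a aut \<Rightarrow> (nat \<Rightarrow> nat) \<Rightarrow> bool" where
  "semi_sorted A n M tp \<longleftrightarrow> pdfa A M \<and> (\<forall>q\<in>states M. tp q < n)"

text \<open>Sorted: lab q = Some (i, V) means q \<in> S_i^V; lab q = None means q \<in> S_f^[n].\<close>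
definition sorted_aut :: "'a set \<Rightarrow> nat \<Rightarrow> 'a aut \<Rightarrow> (nat \<Rightarrow> (nat \<times> nat set) option) \<Rightarrow> bool" where
  "sorted_aut A n M lab \<longleftrightarrow> pdfa A M
     \<and> (\<forall>q\<in>states M. lab q = None \<or>
          (\<exists>i V. lab q = Some (i, V) \<and> V \<subset> {..<n} \<and> i < n \<and> i \<notin> V))
     \<and> (\<exists>i. lab (start M) = Some (i, {}))
     \<and> (\<exists>qf\<in>states M. final M = {qf} \<and> (\<forall>q\<in>states M. lab q = None \<longleftrightarrow> q = qf)
          \<and> (\<forall>c. delta M qf c = None))
     \<and> (\<forall>q\<in>states M. \<forall>i V. lab q = Some (i, V) \<longrightarrow>
          (\<forall>q'. delta M q None = Some q' \<longrightarrow>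
             (\<exists>j. j \<noteq> i \<and> lab q' = Some (j, insert i V))
             \<or> (insert i V = {..<n} \<and> lab q' = None))
        \<and> (\<forall>a q'. delta M q (Some a) = Some q' \<longrightarrow> (\<exists>j. j \<notin> V \<and> lab q' = Some (j, V))))"

definition sorted_tape :: "(nat \<Rightarrow> (nat \<times> nat set) option) \<Rightarrow> nat \<Rightarrow> nat" where
  "sorted_tape lab q = (case lab q of Some (i, V) \<Rightarrow> i | None \<Rightarrow> 0)"

end

theory Submission
  imports Defs "HOL-Library.Nat_Bijection"
begin

text \<open>A sorted automaton is in particular semi-sorted, for the tape assignment read off its
labels. Conversely, a semi-sorted automaton M is sorted by remembering in its states the set V of
tapes whose end marker has already been read: the new states are the pairs (q, V) with
tp q \<notin> V, plus one accept state, entered when the last end marker is read in a transition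
to an accept state of M. Along a run of M on the words w_i$, the set V is exactly the set of
exhausted tapes, so the pruned transitions are those that no accepting run of M can take.\<close>

lemma sorted_aut_imp_semi_sorted:
  assumes "sorted_aut A n M lab"
  shows "semi_sorted A n M (sorted_tape lab)"
proof -
  have pdfa: "pdfa A M"
    and labels: "\<forall>q\<in>states M. lab q = None \<or>
          (\<exists>i V. lab q = Some (i, V) \<and> V \<subset> {..<n} \<and> i < n \<and> i \<notin> V)"
    and start: "\<exists>i. lab (start M) = Some (i, {})"
    using assms unfolding sorted_aut_def by blast+
  obtain i where "lab (start M) = Some (i, {})" using start by blast
  moreover have "start M \<in> states M" using pdfa unfolding pdfa_def by blast
  ultimately have "0 < n" using labels by force
  then have "sorted_tape lab q < n" if "q \<in> states M" for q
    using labels that unfolding sorted_tape_def by (auto split: option.splits)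
  with pdfa show ?thesis unfolding semi_sorted_def by blast
qed

definition dollar_suffixes :: "'a option list list \<Rightarrow> bool" where
  "dollar_suffixes ws \<longleftrightarrow> (\<forall>w\<in>set ws. w = [] \<or> (\<exists>u. w = dollar u))"

definition exhausted :: "'a option list list \<Rightarrow> nat set" where
  "exhausted ws = {i. i < length ws \<and> ws ! i = []}"

definition mark_exhausted :: "'a option \<Rightarrow> nat \<Rightarrow> nat set \<Rightarrow> nat set" where
  "mark_exhausted c i V = (if c = None then insert i V else V)"

lemma dollar_suffixes_map_dollar: "dollar_suffixes (map dollar ws)"
  unfolding dollar_suffixes_def by auto

lemma exhausted_map_dollar: "exhausted (map dollar ws) = {}"
  unfolding exhausted_def dollar_def by auto

lemma finite_exhausted: "finite (exhausted ws)"
  unfolding exhausted_def by simp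

lemma exhausted_eq_lessThan_iff:
  assumes "length ws = n"
  shows "exhausted ws = {..<n} \<longleftrightarrow> (\<forall>w\<in>set ws. w = [])"
proof
  assume "exhausted ws = {..<n}"
  then show "\<forall>w\<in>set ws. w = []"
    using assms unfolding exhausted_def
    by (metis (mono_tags) in_set_conv_nth lessThan_iff mem_Collect_eq)
next
  assume "\<forall>w\<in>set ws. w = []"
  then show "exhausted ws = {..<n}"
    using assms unfolding exhausted_def by auto
qed

lemma Cons_eq_dollarD:
  assumes "c # r = dollar u"
  shows "(c = None \<longleftrightarrow> r = []) \<and> (r = [] \<or> (\<exists>u'. r = dollar u'))"
proof (cases u)
  case Nil
  then show ?thesis using assms by (simp add: dollar_def)
next
  case (Cons a u')
  then have "c = Some a" "r = dollar u'" using assms by (simp_all add: dollar_def)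
  moreover have "dollar u' \<noteq> []" by (simp add: dollar_def)
  ultimately show ?thesis by simp blast
qed

lemma dollar_suffixes_update:
  assumes "dollar_suffixes ws" "j < length ws" "ws ! j = c # r"
  shows "dollar_suffixes (ws[j := r])"
    and "exhausted (ws[j := r]) = mark_exhausted c j (exhausted ws)"
proof -
  obtain u where "c # r = dollar u"
    using assms(1) nth_mem[OF assms(2)] assms(3) unfolding dollar_suffixes_def
    by (metis list.distinct(1))
  from Cons_eq_dollarD[OF this]
  have end_marker: "c = None \<longleftrightarrow> r = []" and rest: "r = [] \<or> (\<exists>u'. r = dollar u')"
    by blast+
  show "dollar_suffixes (ws[j := r])"
    unfolding dollar_suffixes_def
  proof
    fix w assume "w \<in> set (ws[j := r])"
    then have "w = r \<or> w \<in> set ws" using set_update_subset_insert by fast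
    then show "w = [] \<or> (\<exists>u. w = dollar u)"
      using rest assms(1) unfolding dollar_suffixes_def by blast
  qed
  show "exhausted (ws[j := r]) = mark_exhausted c j (exhausted ws)"
    using end_marker assms(2,3) unfolding exhausted_def mark_exhausted_def
    by (cases "c = None") (auto simp: nth_list_update)
qed

lemma acc_all_empty_imp_final:
  assumes "acc M tp q ws" "\<forall>w\<in>set ws. w = []"
  shows "q \<in> final M"
  using assms(1)
proof cases
  case (acc_step c r q')
  then show ?thesis using assms(2) nth_mem by fastforce
qed simp

lemma acc_empty_tape_imp_all_empty:
  assumes "acc M tp q ws" "tp q < length ws" "ws ! tp q = []"
  shows "\<forall>w\<in>set ws. w = []"
  using assms(1)
proof cases
  case (acc_step c r q')
  with assms(3) show ?thesis by simp
qed simp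

text \<open>The state (q, V) is coded as a positive natural number; 0 is the new accept state.\<close>

definition state_code :: "nat \<Rightarrow> nat set \<Rightarrow> nat" where
  "state_code q V = Suc (prod_encode (q, set_encode V))"

definition sort_step ::
    "'a aut \<Rightarrow> (nat \<Rightarrow> nat) \<Rightarrow> nat \<Rightarrow> nat \<Rightarrow> nat set \<Rightarrow> 'a option \<Rightarrow> nat option" where
  "sort_step M tp n q V c =
    (if q \<in> states M \<and> tp q \<notin> V then
      (case delta M q c of
        None \<Rightarrow> None
      | Some q' \<Rightarrow>
          (let V' = mark_exhausted c (tp q) V in
           if V' = {..<n} then (if q' \<in> final M then Some 0 else None)
           else if tp q' \<in> V' then None else Some (state_code q' V')))
     else None)"

definition sort_delta :: "'a aut \<Rightarrow> (nat \<Rightarrow> nat) \<Rightarrow> nat \<Rightarrow> nat \<Rightarrow> 'a option \<Rightarrow> nat option" where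
  "sort_delta M tp n k c = (case k of
      0 \<Rightarrow> None
    | Suc m \<Rightarrow> sort_step M tp n (fst (prod_decode m)) (set_decode (snd (prod_decode m))) c)"

definition sort_label :: "(nat \<Rightarrow> nat) \<Rightarrow> nat \<Rightarrow> (nat \<times> nat set) option" where
  "sort_label tp k = (case k of
      0 \<Rightarrow> None
    | Suc m \<Rightarrow> Some (tp (fst (prod_decode m)), set_decode (snd (prod_decode m))))"

definition sort_aut :: "'a aut \<Rightarrow> (nat \<Rightarrow> nat) \<Rightarrow> nat \<Rightarrow> 'a aut" where
  "sort_aut M tp n =
    \<lparr>states = insert 0 ((\<lambda>(q, V). state_code q V) `
                {(q, V). q \<in> states M \<and> V \<subseteq> {..<n} \<and> tp q \<notin> V}),
     start = state_code (start M) {},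
     delta = sort_delta M tp n,
     final = {0}\<rparr>"

lemma state_code_neq_0 [simp]: "state_code q V \<noteq> 0"
  by (simp add: state_code_def)

lemma sort_label_state_code: "finite V \<Longrightarrow> sort_label tp (state_code q V) = Some (tp q, V)"
  by (simp add: sort_label_def state_code_def)

lemma sort_label_0 [simp]: "sort_label tp 0 = None"
  by (simp add: sort_label_def)

lemma sort_label_eq_None_iff: "sort_label tp k = None \<longleftrightarrow> k = 0"
  by (simp add: sort_label_def split: nat.split)

lemma sorted_tape_sort_label_state_code:
  "finite V \<Longrightarrow> sorted_tape (sort_label tp) (state_code q V) = tp q"
  by (simp add: sorted_tape_def sort_label_state_code)

lemma start_sort_aut: "start (sort_aut M tp n) = state_code (start M) {}"
  by (simp add: sort_aut_def)

lemma sort_aut_delta_0 [simp]: "delta (sort_aut M tp n) 0 c = None"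
  by (simp add: sort_aut_def sort_delta_def)

lemma sort_aut_delta_state_code:
  "finite V \<Longrightarrow> delta (sort_aut M tp n) (state_code q V) c = sort_step M tp n q V c"
  by (simp add: sort_aut_def sort_delta_def state_code_def)

lemma sort_aut_delta_SomeE:
  assumes "delta (sort_aut M tp n) (state_code q V) c = Some k'" "finite V"
  obtains q' where "q \<in> states M" "tp q \<notin> V" "delta M q c = Some q'"
    and "if mark_exhausted c (tp q) V = {..<n} then q' \<in> final M \<and> k' = 0
         else tp q' \<notin> mark_exhausted c (tp q) V \<and> k' = state_code q' (mark_exhausted c (tp q) V)"
  using assms unfolding sort_aut_delta_state_code[OF assms(2)] sort_step_def Let_def
  by (auto split: if_splits option.splits)

lemma sort_aut_delta_eq:
  assumes "q \<in> states M" "tp q \<notin> V" "finite V" "delta M q c = Some q'"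
  shows "delta (sort_aut M tp n) (state_code q V) c =
    (let V' = mark_exhausted c (tp q) V in
     if V' = {..<n} then (if q' \<in> final M then Some 0 else None)
     else if tp q' \<in> V' then None else Some (state_code q' V'))"
  using assms by (simp add: sort_aut_delta_state_code sort_step_def)

lemma state_code_mem_sort_aut:
  "q \<in> states M \<Longrightarrow> V \<subseteq> {..<n} \<Longrightarrow> tp q \<notin> V \<Longrightarrow> state_code q V \<in> states (sort_aut M tp n)"
  unfolding sort_aut_def by force

lemma sort_aut_statesE:
  assumes "k \<in> states (sort_aut M tp n)"
  obtains (accept) "k = 0"
    | (pair) q V where "k = state_code q V" "q \<in> states M" "V \<subseteq> {..<n}" "tp q \<notin> V"
  using assms unfolding sort_aut_def by auto

lemma acc_sort_aut_imp_acc: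
  assumes "acc (sort_aut M tp n) (sorted_tape (sort_label tp)) k ws"
    and "k = state_code q V" "dollar_suffixes ws" "length ws = n" "V = exhausted ws"
  shows "acc M tp q ws"
  using assms
proof (induction arbitrary: q V)
  case (acc_done k ws)
  then show ?case by (simp add: sort_aut_def)
next
  case (acc_step k ws c r k')
  let ?V' = "mark_exhausted c (tp q) V"
  have fin: "finite V" using acc_step.prems(4) finite_exhausted by simp
  have tape: "sorted_tape (sort_label tp) k = tp q"
    using acc_step.prems(1) sorted_tape_sort_label_state_code[OF fin] by simp
  have lt: "tp q < length ws" and nth: "ws ! tp q = c # r"
    using acc_step.hyps(1,2) tape by simp_all
  obtain q' where step: "delta M q c = Some q'"
    and next_state: "if ?V' = {..<n} then q' \<in> final M \<and> k' = 0
                     else tp q' \<notin> ?V' \<and> k' = state_code q' ?V'"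
    using sort_aut_delta_SomeE acc_step.hyps(3) acc_step.prems(1) fin by metis
  have suffixes: "dollar_suffixes (ws[tp q := r])"
    and exh: "exhausted (ws[tp q := r]) = ?V'"
    using dollar_suffixes_update[OF acc_step.prems(2) lt nth] acc_step.prems(4) by simp_all
  have "acc M tp q' (ws[tp q := r])"
  proof (cases "?V' = {..<n}")
    case True
    then have "\<forall>w\<in>set (ws[tp q := r]). w = []"
      using exhausted_eq_lessThan_iff[of "ws[tp q := r]" n] exh acc_step.prems(3) by simp
    then show ?thesis using True next_state by (auto intro: acc.acc_done)
  next
    case False
    then show ?thesis using acc_step.IH next_state suffixes acc_step.prems(3) exh tape by simp
  qed
  with lt nth step show ?case by (rule acc.acc_step)
qed

context
  fixes A :: "'a set" and n :: nat and M :: "'a aut" and tp :: "nat \<Rightarrow> nat"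
  assumes semi_sorted: "semi_sorted A n M tp"
begin

lemma semi_sorted_start_mem: "start M \<in> states M"
  using semi_sorted unfolding semi_sorted_def pdfa_def by blast

lemma semi_sorted_tape_less: "q \<in> states M \<Longrightarrow> tp q < n"
  using semi_sorted unfolding semi_sorted_def by blast

lemma semi_sorted_delta_closed: "q \<in> states M \<Longrightarrow> delta M q c = Some q' \<Longrightarrow> q' \<in> states M"
  using semi_sorted unfolding semi_sorted_def pdfa_def by blast

lemma acc_imp_acc_sort_aut:
  assumes "acc M tp q ws"
    and "q \<in> states M" "dollar_suffixes ws" "length ws = n" "tp q \<notin> exhausted ws"
  shows "acc (sort_aut M tp n) (sorted_tape (sort_label tp)) (state_code q (exhausted ws)) ws"
  using assms
proof induction
  case (acc_done q ws)
  then show ?case using exhausted_eq_lessThan_iff semi_sorted_tape_less by blast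
next
  case (acc_step q ws c r q')
  let ?ws' = "ws[tp q := r]" and ?V' = "mark_exhausted c (tp q) (exhausted ws)"
  have suffixes: "dollar_suffixes ?ws'" and exh: "exhausted ?ws' = ?V'"
    using dollar_suffixes_update[OF acc_step.prems(2) acc_step.hyps(1,2)] by simp_all
  have len: "length ?ws' = n" using acc_step.prems(3) by simp
  have delta_eq: "delta (sort_aut M tp n) (state_code q (exhausted ws)) c =
    (if ?V' = {..<n} then (if q' \<in> final M then Some 0 else None)
     else if tp q' \<in> ?V' then None else Some (state_code q' ?V'))"
    using sort_aut_delta_eq[where tp = tp and n = n,
        OF acc_step.prems(1,4) finite_exhausted[of ws] acc_step.hyps(3)]
    by simp
  have tape: "sorted_tape (sort_label tp) (state_code q (exhausted ws)) = tp q"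
    by (simp add: sorted_tape_sort_label_state_code finite_exhausted)
  show ?case
  proof (cases "?V' = {..<n}")
    case True
    then have all_empty: "\<forall>w\<in>set ?ws'. w = []"
      using exhausted_eq_lessThan_iff[OF len] exh by simp
    then have "q' \<in> final M" using acc_step.hyps(4) acc_all_empty_imp_final by blast
    then have step: "delta (sort_aut M tp n) (state_code q (exhausted ws)) c = Some 0"
      using True delta_eq by simp
    have "acc (sort_aut M tp n) (sorted_tape (sort_label tp)) 0 ?ws'"
      using all_empty by (intro acc.acc_done) (simp add: sort_aut_def)
    then show ?thesis
      using acc.acc_step[where ws = ws and r = r, OF _ _ step] tape acc_step.hyps(1,2) by simp
  next
    case False
    have "tp q' \<notin> ?V'"
    proof
      assume "tp q' \<in> ?V'"
      then have "tp q' < length ?ws'" "?ws' ! tp q' = []" using exh unfolding exhausted_def by auto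
      then have "\<forall>w\<in>set ?ws'. w = []" using acc_step.hyps(4) acc_empty_tape_imp_all_empty by blast
      then show False using False exhausted_eq_lessThan_iff[OF len] exh by simp
    qed
    then have step: "delta (sort_aut M tp n) (state_code q (exhausted ws)) c = Some (state_code q' ?V')"
      using False delta_eq by simp
    have "acc (sort_aut M tp n) (sorted_tape (sort_label tp)) (state_code q' ?V') ?ws'"
      using acc_step.IH semi_sorted_delta_closed[OF acc_step.prems(1) acc_step.hyps(3)] suffixes len exh
        \<open>tp q' \<notin> ?V'\<close> by simp
    then show ?thesis
      using acc.acc_step[where ws = ws and r = r, OF _ _ step] tape acc_step.hyps(1,2) by simp
  qed
qed

lemma acc_sort_aut_start_iff:
  assumes "length ws = n"
  shows "acc (sort_aut M tp n) (sorted_tape (sort_label tp)) (state_code (start M) {}) (map dollar ws)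
     \<longleftrightarrow> acc M tp (start M) (map dollar ws)"
proof
  assume "acc (sort_aut M tp n) (sorted_tape (sort_label tp)) (state_code (start M) {}) (map dollar ws)"
  from acc_sort_aut_imp_acc[OF this refl dollar_suffixes_map_dollar]
  show "acc M tp (start M) (map dollar ws)" using assms by (simp add: exhausted_map_dollar)
next
  assume "acc M tp (start M) (map dollar ws)"
  from acc_imp_acc_sort_aut[OF this semi_sorted_start_mem dollar_suffixes_map_dollar]
  show "acc (sort_aut M tp n) (sorted_tape (sort_label tp)) (state_code (start M) {}) (map dollar ws)"
    using assms by (simp add: exhausted_map_dollar)
qed

lemma lang_sort_aut: "lang A n (sort_aut M tp n) (sorted_tape (sort_label tp)) = lang A n M tp"
  unfolding lang_def start_sort_aut using acc_sort_aut_start_iff by blast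

lemma sort_aut_transitionE:
  assumes "k \<in> states (sort_aut M tp n)" "delta (sort_aut M tp n) k c = Some k'"
  obtains (accept) q V where "k = state_code q V" "q \<in> states M" "V \<subseteq> {..<n}" "tp q \<notin> V"
    and "mark_exhausted c (tp q) V = {..<n}" "k' = 0"
  | (pair) q V q' where "k = state_code q V" "q \<in> states M" "V \<subseteq> {..<n}" "tp q \<notin> V"
    and "mark_exhausted c (tp q) V \<noteq> {..<n}" "q' \<in> states M"
      "tp q' \<notin> mark_exhausted c (tp q) V" "k' = state_code q' (mark_exhausted c (tp q) V)"
proof -
  obtain q V where k: "k = state_code q V" "q \<in> states M" "V \<subseteq> {..<n}" "tp q \<notin> V"
    using assms by (cases rule: sort_aut_statesE) auto
  moreover have "finite V" using k(3) finite_subset by blast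
  ultimately obtain q' where step: "delta M q c = Some q'"
    and next_state: "if mark_exhausted c (tp q) V = {..<n} then q' \<in> final M \<and> k' = 0
         else tp q' \<notin> mark_exhausted c (tp q) V \<and> k' = state_code q' (mark_exhausted c (tp q) V)"
    using sort_aut_delta_SomeE assms(2) by metis
  show thesis
  proof (cases "mark_exhausted c (tp q) V = {..<n}")
    case True
    with next_state have "k' = 0" by simp
    with k True show thesis by (rule that(1))
  next
    case False
    with next_state have "tp q' \<notin> mark_exhausted c (tp q) V"
      and "k' = state_code q' (mark_exhausted c (tp q) V)" by simp_all
    with k False semi_sorted_delta_closed[OF k(2) step] show thesis by (rule that(2))
  qed
qed

lemma mark_exhausted_subset: "q \<in> states M \<Longrightarrow> V \<subseteq> {..<n} \<Longrightarrow> mark_exhausted c (tp q) V \<subseteq> {..<n}"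
  using semi_sorted_tape_less unfolding mark_exhausted_def by auto

lemma sort_label_state_code_lessThan:
  "V \<subseteq> {..<n} \<Longrightarrow> sort_label tp (state_code q V) = Some (tp q, V)"
  using finite_subset[OF _ finite_lessThan] by (simp add: sort_label_state_code)

lemma pdfa_sort_aut: "pdfa A (sort_aut M tp n)"
  unfolding pdfa_def
proof (intro conjI allI ballI impI)
  have "{(q, V). q \<in> states M \<and> V \<subseteq> {..<n} \<and> tp q \<notin> V} \<subseteq> states M \<times> Pow {..<n}"
    by auto
  moreover have "finite (states M \<times> Pow {..<n})"
    using semi_sorted unfolding semi_sorted_def pdfa_def by simp
  ultimately have "finite {(q, V). q \<in> states M \<and> V \<subseteq> {..<n} \<and> tp q \<notin> V}"
    by (rule finite_subset)
  then show "finite (states (sort_aut M tp n))" by (simp add: sort_aut_def)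
  show "start (sort_aut M tp n) \<in> states (sort_aut M tp n)"
    using state_code_mem_sort_aut[OF semi_sorted_start_mem] by (simp add: start_sort_aut)
  show "final (sort_aut M tp n) \<subseteq> states (sort_aut M tp n)" by (simp add: sort_aut_def)
next
  fix k c k' assume "k \<in> states (sort_aut M tp n)" "delta (sort_aut M tp n) k c = Some k'"
  then show "k' \<in> states (sort_aut M tp n)"
  proof (cases rule: sort_aut_transitionE)
    case accept
    then show ?thesis by (simp add: sort_aut_def)
  next
    case (pair q V q')
    then show ?thesis
      using state_code_mem_sort_aut[where tp = tp,
          OF pair(6) mark_exhausted_subset[OF pair(2,3)] pair(7)]
      by simp
  qed
next
  fix k a assume "a \<notin> A"
  then show "delta (sort_aut M tp n) k (Some a) = None"
    using semi_sorted unfolding semi_sorted_def pdfa_def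
    by (simp add: sort_aut_def sort_delta_def sort_step_def split: nat.split)
qed

lemma sort_label_cases:
  assumes "k \<in> states (sort_aut M tp n)"
  shows "sort_label tp k = None \<or>
    (\<exists>i V. sort_label tp k = Some (i, V) \<and> V \<subset> {..<n} \<and> i < n \<and> i \<notin> V)"
  using assms
proof (cases rule: sort_aut_statesE)
  case accept
  then show ?thesis by simp
next
  case (pair q V)
  moreover have "tp q < n" using pair semi_sorted_tape_less by blast
  ultimately show ?thesis by (auto simp: sort_label_state_code_lessThan)
qed

lemma sort_label_end_marker_step:
  assumes "k \<in> states (sort_aut M tp n)" and label: "sort_label tp k = Some (i, W)"
    and "delta (sort_aut M tp n) k None = Some k'"
  shows "(\<exists>j. j \<noteq> i \<and> sort_label tp k' = Some (j, insert i W))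
    \<or> (insert i W = {..<n} \<and> sort_label tp k' = None)"
  using assms(1,3)
proof (cases rule: sort_aut_transitionE)
  case (accept q V)
  then show ?thesis using label by (simp add: sort_label_state_code_lessThan mark_exhausted_def)
next
  case (pair q V q')
  then show ?thesis using label mark_exhausted_subset[OF pair(2,3), of None]
    by (simp add: sort_label_state_code_lessThan mark_exhausted_def)
qed

lemma sort_label_letter_step:
  assumes "k \<in> states (sort_aut M tp n)" and label: "sort_label tp k = Some (i, W)"
    and "delta (sort_aut M tp n) k (Some a) = Some k'"
  shows "\<exists>j. j \<notin> W \<and> sort_label tp k' = Some (j, W)"
  using assms(1,3)
proof (cases rule: sort_aut_transitionE)
  case (accept q V)
  then show ?thesis using semi_sorted_tape_less by (auto simp: mark_exhausted_def)
next
  case (pair q V q')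
  then show ?thesis using label by (simp add: sort_label_state_code_lessThan mark_exhausted_def)
qed

lemma sorted_aut_sort_aut: "sorted_aut A n (sort_aut M tp n) (sort_label tp)"
  unfolding sorted_aut_def
proof (intro conjI pdfa_sort_aut ballI allI impI sort_label_cases)
  show "\<exists>i. sort_label tp (start (sort_aut M tp n)) = Some (i, {})"
    by (simp add: start_sort_aut sort_label_state_code)
  show "\<exists>qf\<in>states (sort_aut M tp n). final (sort_aut M tp n) = {qf}
          \<and> (\<forall>q\<in>states (sort_aut M tp n). sort_label tp q = None \<longleftrightarrow> q = qf)
          \<and> (\<forall>c. delta (sort_aut M tp n) qf c = None)"
    by (rule bexI[of _ 0]) (simp_all add: sort_label_eq_None_iff sort_aut_def sort_delta_def)
qed (simp_all add: sort_label_end_marker_step sort_label_letter_step)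

end

theorem mainTheorem6:
  fixes A :: "'a set" and n :: nat and L :: "'a list list set"
  assumes "finite A"
  shows "(\<exists>M lab. sorted_aut A n M lab \<and> L = lang A n M (sorted_tape lab))
     \<longleftrightarrow> (\<exists>M tp. semi_sorted A n M tp \<and> L = lang A n M tp)"
proof
  assume "\<exists>M lab. sorted_aut A n M lab \<and> L = lang A n M (sorted_tape lab)"
  then show "\<exists>M tp. semi_sorted A n M tp \<and> L = lang A n M tp"
    using sorted_aut_imp_semi_sorted by blast
next
  assume "\<exists>M tp. semi_sorted A n M tp \<and> L = lang A n M tp"
  then obtain M tp where semi: "semi_sorted A n M tp" and L: "L = lang A n M tp" by blast
  have "sorted_aut A n (sort_aut M tp n) (sort_label tp)"
    and "L = lang A n (sort_aut M tp n) (sorted_tape (sort_label tp))"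
    using sorted_aut_sort_aut[OF semi] lang_sort_aut[OF semi] L by simp_all
  then show "\<exists>M lab. sorted_aut A n M lab \<and> L = lang A n M (sorted_tape lab)" by blast
qed

end
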